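(* Let $\lambda=(\lambda_1,\dots,\lambda_l)$ be a partition and $0\le k\le l-1$. If $\alpha=(\alpha_1,\alpha_2,\dots)$ (finitely many nonzero entries) satisfies $\mathrm{wt}\,\alpha<N_{\lambda,k}$, then $\partial^\alpha s_\lambda\big(\sum_{i=1}^k[x_i]\big)=0$ (for $k=0$ this means $\partial^\alpha s_\lambda(0)=0$).
   Context: For $t=(t_1,t_2,\dots)$ define $p_m(t)$ by $\exp(\sum_{m\ge1}t_mk^m)=\sum_{m\ge0}p_m(t)k^m$, $p_m=0$ for $m<0$; $s_\lambda(t)=\det(p_{\lambda_i-i+j}(t))_{1\le i,j\le l}$. $[x]=(x,x^2/2,x^3/3,\dots)$. $\partial_i=\partial/\partial t_i$, $\partial^\alpha=\partial_1^{\alpha_1}\partial_2^{\alpha_2}\cdots$, $\mathrm{wt}\,\alpha=\sum_i i\alpha_i$. $N_{\lambda,k}=\lambda_{k+1}+\dots+\lambda_l$. *)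

theory Defs
  imports Complex_Main "HOL-Analysis.Derivative" "HOL-Computational_Algebra.Formal_Power_Series" "Jordan_Normal_Form.Determinant"
begin

text \<open>Times t = (t_1, t_2, ...) are modelled as functions nat => complex; the entry t 0 is unused.\<close>

definition schur_p :: "int \<Rightarrow> (nat \<Rightarrow> complex) \<Rightarrow> complex" where
  "schur_p m t = (if m < 0 then 0 else
     fps_nth (fps_exp 1 oo Abs_fps (\<lambda>n. if n = 0 then 0 else t n)) (nat m))"

text \<open>s_lambda(t) = det (p_{lambda_i - i + j}(t))_{1<=i,j<=l}, written 0-indexed.\<close>
definition schur_s :: "nat list \<Rightarrow> (nat \<Rightarrow> complex) \<Rightarrow> complex" where
  "schur_s lam t = det (mat (length lam) (length lam)
     (\<lambda>(i, j). schur_p (int (lam ! i) - int i + int j) t))"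

definition is_partition :: "nat list \<Rightarrow> bool" where
  "is_partition lam \<longleftrightarrow> sorted_wrt (\<ge>) lam \<and> (\<forall>a \<in> set lam. 0 < a)"

definition pdiff :: "nat \<Rightarrow> ((nat \<Rightarrow> complex) \<Rightarrow> complex) \<Rightarrow> ((nat \<Rightarrow> complex) \<Rightarrow> complex)" where
  "pdiff i F = (\<lambda>t. deriv (\<lambda>z. F (t(i := z))) (t i))"

fun multi_pdiff :: "(nat \<Rightarrow> nat) \<Rightarrow> nat \<Rightarrow> ((nat \<Rightarrow> complex) \<Rightarrow> complex) \<Rightarrow> ((nat \<Rightarrow> complex) \<Rightarrow> complex)" where
  "multi_pdiff alpha 0 F = F"
| "multi_pdiff alpha (Suc n) F = multi_pdiff alpha n ((pdiff (Suc n) ^^ alpha (Suc n)) F)"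

definition wt :: "(nat \<Rightarrow> nat) \<Rightarrow> nat \<Rightarrow> nat" where
  "wt alpha n = (\<Sum>i=1..n. i * alpha i)"

definition bracket_sum :: "nat \<Rightarrow> (nat \<Rightarrow> complex) \<Rightarrow> nat \<Rightarrow> complex" where
  "bracket_sum k x = (\<lambda>m. if m = 0 then 0 else (\<Sum>i=1..k. x i ^ m / of_nat m))"

definition N_lk :: "nat list \<Rightarrow> nat \<Rightarrow> nat" where
  "N_lk lam k = sum_list (drop k lam)"

end

theory Submission
  imports Defs
begin

(*
  Since d p_n / d t_m = p_(n-m), differentiating s_lambda = det (p_(lambda_i - i + j)) with respect
  to t_m lowers the index of one row by m. Hence d^alpha s_lambda is a sum of determinants
  det (p_(c_i + j)) with c_i = lambda_i - i - a_i and a_1 + ... + a_l = wt alpha.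

  At t = [x_1] + ... + [x_k] the generating function of the p_n is 1 / prod_i (1 - x_i X), so p_n
  vanishes for n < 0 and satisfies a linear recurrence of order k for n > 0. Therefore the row
  (p_(c + j))_j equals the row (p_(j - s))_j with s = -c if c <= 0, and is a combination of the
  rows with s < k if c > -k. In a nonzero term of the resulting determinant expansion the rows
  sent to the columns s = k, ..., l-1 must have c_i = -s; as lambda_i - i decreases, summing their
  a_i gives a_1 + ... + a_l >= lambda_(k+1) + ... + lambda_l = N_(lambda,k).
*)

section \<open>Determinants of sequences satisfying a linear recurrence\<close>

text \<open>If \<open>h\<close> satisfies \<open>h n = - (\<Sum>r=1..k. q r * h (n - r))\<close> for \<open>n > 0\<close>, then
  \<open>recurrence_coeff q k c s\<close> is the coefficient of \<open>h (j - s)\<close> in the expansion of \<open>h (c + j)\<close>,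
  obtained by applying the recurrence until all arguments are at most \<open>j\<close>.\<close>

function recurrence_coeff :: "(nat \<Rightarrow> 'a::comm_ring_1) \<Rightarrow> nat \<Rightarrow> int \<Rightarrow> nat \<Rightarrow> 'a"
where
  "recurrence_coeff q k c s = (if c \<le> 0 then (if int s = - c then 1 else 0)
      else - (\<Sum>r=1..k. q r * recurrence_coeff q k (c - int r) s))"
  by auto
termination by (relation "measure (\<lambda>(q, k, c, s). nat c)") auto

declare recurrence_coeff.simps [simp del]

lemma recurrence_coeff_nonpos:
  "c \<le> 0 \<Longrightarrow> recurrence_coeff q k c s = (if int s = - c then 1 else 0)"
  by (simp add: recurrence_coeff.simps)

lemma recurrence_coeff_eq_0:
  "1 - int k \<le> c \<Longrightarrow> k \<le> s \<Longrightarrow> recurrence_coeff q k c s = 0"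
proof (induction q k c s rule: recurrence_coeff.induct)
  case (1 q k c s)
  then show ?case
    by (subst recurrence_coeff.simps) (auto intro!: sum.neutral)
qed

lemma linear_recurrence_expand:
  fixes h :: "int \<Rightarrow> 'a::comm_ring_1"
  assumes h_neg: "\<And>n. n < 0 \<Longrightarrow> h n = 0"
    and h_rec: "\<And>n. 0 < n \<Longrightarrow> h n = - (\<Sum>r=1..k. q r * h (n - int r))"
    and "j < l"
  shows "h (c + int j) = (\<Sum>s<l. recurrence_coeff q k c s * h (int j - int s))"
  using assms(3)
proof (induction "nat c" arbitrary: c j rule: less_induct)
  case less
  show ?case
  proof (cases "c \<le> 0")
    case True
    have "(\<Sum>s<l. recurrence_coeff q k c s * h (int j - int s))
        = (\<Sum>s<l. if s = nat (- c) then h (int j - int s) else 0)"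
      using True by (intro sum.cong) (auto simp: recurrence_coeff_nonpos)
    also have "\<dots> = h (c + int j)"
      using True less.prems h_neg by (auto simp: sum.delta add.commute)
    finally show ?thesis by simp
  next
    case False
    have "h (c + int j) = - (\<Sum>r=1..k. q r * h (c - int r + int j))"
      using False by (subst h_rec) (auto simp: algebra_simps)
    also have "\<dots> = - (\<Sum>r=1..k. q r * (\<Sum>s<l. recurrence_coeff q k (c - int r) s * h (int j - int s)))"
      using False less.prems
      by (intro arg_cong[where f = uminus] sum.cong refl arg_cong[where f = "(*) _"] less.hyps) auto
    also have "\<dots> = (\<Sum>s<l. (- (\<Sum>r=1..k. q r * recurrence_coeff q k (c - int r) s))
                              * h (int j - int s))"
      by (simp add: sum_distrib_left sum_distrib_right sum_negf mult.assoc) (rule sum.swap)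
    also have "\<dots> = (\<Sum>s<l. recurrence_coeff q k c s * h (int j - int s))"
      using False by (subst (2) recurrence_coeff.simps) simp
    finally show ?thesis .
  qed
qed

lemma sum_antitone_le_subset:
  fixes f :: "nat \<Rightarrow> int"
  assumes L: "L \<subseteq> {0..<l}" "card L = l - k"
    and antitone: "\<And>i j. i \<le> j \<Longrightarrow> j < l \<Longrightarrow> f j \<le> f i"
  shows "(\<Sum>i=k..<l. f i) \<le> (\<Sum>i\<in>L. f i)"
proof (cases "k < l")
  case True
  let ?K = "{k..<l}"
  have fin: "finite L" using L(1) finite_subset by blast
  have card_eq: "card (L - ?K) = card (?K - L)"
    using L fin by (simp add: card_Diff_subset_Int Int_commute)
  have "(\<Sum>i\<in>?K - L. f i) \<le> of_nat (card (?K - L)) * f k"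
    by (rule sum_bounded_above) (auto intro!: antitone)
  also have "\<dots> \<le> (\<Sum>i\<in>L - ?K. f i)"
    unfolding card_eq[symmetric]
    by (rule sum_bounded_below) (use L(1) True in \<open>auto intro!: antitone\<close>)
  finally show ?thesis
    using sum.Int_Diff[OF fin, of f ?K] sum.Int_Diff[of ?K f L] by (simp add: Int_commute)
next
  case False
  then have "L = {}" using L finite_subset[OF L(1)] by auto
  with False show ?thesis by simp
qed

lemma permutation_weight_bound:
  fixes f :: "nat \<Rightarrow> int" and a p :: "nat \<Rightarrow> nat"
  assumes p: "p permutes {0..<l}"
    and antitone: "\<And>i j. i \<le> j \<Longrightarrow> j < l \<Longrightarrow> f j \<le> f i"
    and high_rows: "\<And>i. i < l \<Longrightarrow> k \<le> p i \<Longrightarrow> int (a i) = f i + int (p i)"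
  shows "(\<Sum>i=k..<l. f i + int i) \<le> (\<Sum>i<l. int (a i))"
proof -
  define L where "L = {i\<in>{0..<l}. k \<le> p i}"
  have inj: "inj_on p L"
    using permutes_inj[OF p] by (auto intro: inj_on_subset)
  have pL: "p ` L = {k..<l}"
    using permutes_image[OF p] unfolding L_def by force
  have "(\<Sum>i=k..<l. f i + int i) = (\<Sum>i=k..<l. f i) + (\<Sum>i\<in>L. int (p i))"
    using sum.reindex[OF inj, of int] pL by (simp add: sum.distrib)
  also have "\<dots> \<le> (\<Sum>i\<in>L. f i) + (\<Sum>i\<in>L. int (p i))"
    using card_image[OF inj] pL
    by (intro add_right_mono sum_antitone_le_subset antitone) (auto simp: L_def)
  also have "\<dots> = (\<Sum>i\<in>L. int (a i))"
    by (simp add: L_def high_rows sum.distrib)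
  also have "\<dots> \<le> (\<Sum>i<l. int (a i))"
    by (rule sum_mono2) (auto simp: L_def)
  finally show ?thesis .
qed

lemma det_linear_recurrence_eq_0:
  fixes h :: "int \<Rightarrow> 'a::comm_ring_1" and f :: "nat \<Rightarrow> int" and a :: "nat \<Rightarrow> nat"
  assumes h_neg: "\<And>n. n < 0 \<Longrightarrow> h n = 0"
    and h_rec: "\<And>n. 0 < n \<Longrightarrow> h n = - (\<Sum>r=1..k. q r * h (n - int r))"
    and antitone: "\<And>i j. i \<le> j \<Longrightarrow> j < l \<Longrightarrow> f j \<le> f i"
    and small: "(\<Sum>i<l. int (a i)) < (\<Sum>i=k..<l. f i + int i)"
  shows "det (mat l l (\<lambda>(i, j). h (f i - int (a i) + int j))) = 0"
proof -
  let ?c = "\<lambda>i. f i - int (a i)"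
  let ?B = "mat l l (\<lambda>(i, s). recurrence_coeff q k (?c i) s)"
  let ?W = "mat l l (\<lambda>(s, j). h (int j - int s))"
  have factor: "mat l l (\<lambda>(i, j). h (?c i + int j)) = ?B * ?W"
    by (rule eq_matI)
      (auto simp: scalar_prod_def atLeast0LessThan linear_recurrence_expand[OF h_neg h_rec])
  have "(\<Prod>i=0..<l. ?B $$ (i, p i)) = 0" if p: "p permutes {0..<l}" for p
  proof (rule ccontr)
    assume "(\<Prod>i=0..<l. ?B $$ (i, p i)) \<noteq> 0"
    then have nonzero: "recurrence_coeff q k (?c i) (p i) \<noteq> 0" if "i < l" for i
      using that permutes_in_image[OF p, of i] prod_zero[of "{0..<l}" "\<lambda>i. ?B $$ (i, p i)"]
      by force
    have "int (a i) = f i + int (p i)" if "i < l" "k \<le> p i" for i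
    proof -
      have "?c i \<le> 0"
        using recurrence_coeff_eq_0[of k "?c i"] nonzero[OF that(1)] that(2) by fastforce
      then show ?thesis
        using nonzero[OF that(1)] by (auto simp: recurrence_coeff_nonpos split: if_splits)
    qed
    with permutation_weight_bound[OF p antitone] small show False by fastforce
  qed
  then have "det ?B = 0"
    by (subst det_def'[of _ l]) (auto intro!: sum.neutral)
  then show ?thesis
    using factor det_mult[of ?B l ?W] by simp
qed

section \<open>Derivatives of Schur functions\<close>

lemma has_field_derivative_det:
  fixes F :: "'a::real_normed_field \<Rightarrow> nat \<Rightarrow> nat \<Rightarrow> 'a"
  assumes "\<And>i j. i < n \<Longrightarrow> j < n \<Longrightarrow>
    ((\<lambda>z. F z i j) has_field_derivative F' i j) (at z)"
  shows "((\<lambda>z. det (mat n n (\<lambda>(i, j). F z i j))) has_field_derivative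
           (\<Sum>r<n. det (mat n n (\<lambda>(i, j). if i = r then F' i j else F z i j)))) (at z)"
proof -
  let ?P = "{p. p permutes {0..<n}}"
  have expand: "det (mat n n (\<lambda>(i, j). G i j)) = (\<Sum>p\<in>?P. signof p * (\<Prod>i=0..<n. G i (p i)))"
    for G :: "nat \<Rightarrow> nat \<Rightarrow> 'a"
    by (subst det_def'[of _ n]) (auto intro!: sum.cong prod.cong dest: permutes_in_image)
  have row: "(\<Prod>i=0..<n. if i = r then F' i (p i) else F z i (p i))
      = F' r (p r) * (\<Prod>i\<in>{0..<n}-{r}. F z i (p i))" if "r < n" for p r
    using that by (subst prod.remove[of _ r]) (auto intro!: prod.cong)
  have "((\<lambda>z. \<Sum>p\<in>?P. signof p * (\<Prod>i=0..<n. F z i (p i))) has_field_derivative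
      (\<Sum>p\<in>?P. signof p * (\<Sum>r=0..<n. F' r (p r) * (\<Prod>i\<in>{0..<n}-{r}. F z i (p i))))) (at z)"
    using assms
    by (intro DERIV_sum DERIV_cmult has_field_derivative_prod)
      (auto dest: permutes_in_image)
  also have "(\<Sum>p\<in>?P. signof p * (\<Sum>r=0..<n. F' r (p r) * (\<Prod>i\<in>{0..<n}-{r}. F z i (p i))))
      = (\<Sum>r<n. \<Sum>p\<in>?P. signof p * (\<Prod>i=0..<n. if i = r then F' i (p i) else F z i (p i)))"
    unfolding sum_distrib_left sum.swap[of _ ?P] atLeast0LessThan[symmetric]
    by (intro sum.cong refl) (simp add: row)
  finally show ?thesis
    unfolding expand .
qed

definition time_fps :: "(nat \<Rightarrow> complex) \<Rightarrow> complex fps" where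
  "time_fps t = Abs_fps (\<lambda>n. if n = 0 then 0 else t n)"

definition schur_gen :: "(nat \<Rightarrow> complex) \<Rightarrow> complex fps" where
  "schur_gen t = fps_exp 1 oo time_fps t"

lemma schur_p_eq_schur_gen: "schur_p m t = (if m < 0 then 0 else fps_nth (schur_gen t) (nat m))"
  by (simp add: schur_p_def schur_gen_def time_fps_def)

lemma schur_gen_nth_0 [simp]: "fps_nth (schur_gen t) 0 = 1"
  by (simp add: schur_gen_def fps_compose_nth)

lemma fps_deriv_schur_gen: "fps_deriv (schur_gen t) = schur_gen t * fps_deriv (time_fps t)"
  unfolding schur_gen_def
  by (subst fps_compose_deriv) (auto simp: time_fps_def fps_compose_mult_distrib)

lemma schur_gen_rec:
  assumes "0 < n"
  shows "of_nat n * fps_nth (schur_gen t) n = (\<Sum>j=1..n. of_nat j * t j * fps_nth (schur_gen t) (n - j))"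
proof -
  obtain m where n: "n = Suc m" using assms gr0_implies_Suc by blast
  have "of_nat n * fps_nth (schur_gen t) n = (\<Sum>j=0..m. fps_nth (schur_gen t) j * (of_nat (n - j) * t (n - j)))"
    using arg_cong[OF fps_deriv_schur_gen, of "\<lambda>F. fps_nth F m"]
    by (simp add: n fps_mult_nth time_fps_def Suc_diff_le mult.commute)
  also have "\<dots> = (\<Sum>j=1..n. of_nat j * t j * fps_nth (schur_gen t) (n - j))"
    by (rule sum.reindex_bij_witness[of _ "\<lambda>j. n - j" "\<lambda>j. n - j"]) (auto simp: n)
  finally show ?thesis .
qed

lemma schur_gen_rec_shift:
  "(\<Sum>j=1..n. of_nat j * t j * (if i \<le> n - j then fps_nth (schur_gen t) (n - j - i) else 0))
    = of_nat (n - i) * fps_nth (schur_gen t) (n - i)"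
proof (cases "i < n")
  case True
  have "(\<Sum>j=1..n. of_nat j * t j * (if i \<le> n - j then fps_nth (schur_gen t) (n - j - i) else 0))
      = (\<Sum>j=1..n - i. of_nat j * t j * fps_nth (schur_gen t) (n - i - j))"
    by (rule sum.mono_neutral_cong_right) (auto simp: diff_diff_left add.commute)
  also have "\<dots> = of_nat (n - i) * fps_nth (schur_gen t) (n - i)"
    using schur_gen_rec[of "n - i" t] True by simp
  finally show ?thesis .
qed (auto intro!: sum.neutral)

lemma has_field_derivative_schur_gen_nth:
  assumes "0 < i"
  shows "((\<lambda>z. fps_nth (schur_gen (t(i := z))) n) has_field_derivative
           (if i \<le> n then fps_nth (schur_gen (t(i := z))) (n - i) else 0)) (at z)"
proof (induction n arbitrary: z rule: less_induct)
  case (less n)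
  define E where "E w = schur_gen (t(i := w))" for w
  show ?case
  proof (cases "n = 0")
    case True
    then show ?thesis using assms by simp
  next
    case False
    have rec: "fps_nth (E w) n = (\<Sum>j=1..n. of_nat j * (t(i := w)) j * fps_nth (E w) (n - j)) / of_nat n" for w
      using schur_gen_rec[of n "t(i := w)"] False by (simp add: E_def field_simps)
    let ?D = "\<lambda>j. if i \<le> n - j then fps_nth (E z) (n - j - i) else 0"
    let ?S = "\<Sum>j=1..n. (if j = i then of_nat i * fps_nth (E z) (n - i) else 0)
      + of_nat j * (t(i := z)) j * ?D j"
    have "((\<lambda>w. \<Sum>j=1..n. of_nat j * (t(i := w)) j * fps_nth (E w) (n - j))
        has_field_derivative ?S) (at z)"
    proof (rule DERIV_sum)
      fix j assume j: "j \<in> {1..n}"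
      have "((\<lambda>w. (t(i := w)) j) has_field_derivative (if j = i then 1 else 0)) (at z)"
        by (cases "j = i") auto
      moreover have "((\<lambda>w. fps_nth (E w) (n - j)) has_field_derivative ?D j) (at z)"
        unfolding E_def by (rule less.IH) (use j False in auto)
      ultimately show "((\<lambda>w. of_nat j * (t(i := w)) j * fps_nth (E w) (n - j)) has_field_derivative
          (if j = i then of_nat i * fps_nth (E z) (n - i) else 0) + of_nat j * (t(i := z)) j * ?D j) (at z)"
        by (auto intro!: derivative_eq_intros)
    qed
    also have "?S = of_nat n * (if i \<le> n then fps_nth (E z) (n - i) else 0)"
      using assms schur_gen_rec_shift[where t = "t(i := z)" and n = n and i = i]
      unfolding sum.distrib E_def by (auto simp: sum.delta algebra_simps of_nat_diff simp del: fun_upd_apply)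
    finally have "((\<lambda>w. fps_nth (E w) n) has_field_derivative
        of_nat n * (if i \<le> n then fps_nth (E z) (n - i) else 0) / of_nat n) (at z)"
      unfolding rec by (rule DERIV_cdivide)
    then show ?thesis using False unfolding E_def by (simp del: fun_upd_apply)
  qed
qed

lemma has_field_derivative_schur_p:
  assumes "0 < i"
  shows "((\<lambda>z. schur_p m (t(i := z))) has_field_derivative schur_p (m - int i) (t(i := z))) (at z)"
proof (cases "m < 0")
  case False
  have "schur_p (m - int i) (t(i := z))
      = (if i \<le> nat m then fps_nth (schur_gen (t(i := z))) (nat m - i) else 0)"
    using False by (auto simp: schur_p_eq_schur_gen nat_diff_distrib)
  then show ?thesis
    using has_field_derivative_schur_gen_nth[OF assms, of t "nat m" z] False
    by (simp add: schur_p_eq_schur_gen)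
qed (simp add: schur_p_eq_schur_gen)

definition shifted_det :: "nat \<Rightarrow> (nat \<Rightarrow> int) \<Rightarrow> (nat \<Rightarrow> complex) \<Rightarrow> complex"
where
  "shifted_det l c t = det (mat l l (\<lambda>(i, j). schur_p (c i + int j) t))"

lemma has_field_derivative_shifted_det:
  assumes "0 < m"
  shows "((\<lambda>z. shifted_det l c (t(m := z))) has_field_derivative
           (\<Sum>r<l. shifted_det l (c(r := c r - int m)) (t(m := z)))) (at z)"
proof -
  have "det (mat l l (\<lambda>(i, j). if i = r then schur_p (c i + int j - int m) (t(m := z))
                                 else schur_p (c i + int j) (t(m := z))))
      = shifted_det l (c(r := c r - int m)) (t(m := z))" for r
    unfolding shifted_det_def by (auto intro!: arg_cong[where f = det] cong_mat simp: algebra_simps)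
  moreover have "((\<lambda>z. shifted_det l c (t(m := z))) has_field_derivative
      (\<Sum>r<l. det (mat l l (\<lambda>(i, j). if i = r then schur_p (c i + int j - int m) (t(m := z))
                                 else schur_p (c i + int j) (t(m := z)))))) (at z)"
    unfolding shifted_det_def
    by (rule has_field_derivative_det) (rule has_field_derivative_schur_p[OF assms])
  ultimately show ?thesis by simp
qed

text \<open>Each weight vector \<open>a\<close> records by how much every row of the determinant has been lowered.\<close>

definition det_sum ::
  "nat \<Rightarrow> (nat \<Rightarrow> int) \<Rightarrow> (nat \<Rightarrow> nat) list \<Rightarrow> (nat \<Rightarrow> complex) \<Rightarrow> complex"
where
  "det_sum l c A t = (\<Sum>a\<leftarrow>A. shifted_det l (\<lambda>r. c r - int (a r)) t)"

definition raise_rows :: "nat \<Rightarrow> nat \<Rightarrow> (nat \<Rightarrow> nat) list \<Rightarrow> (nat \<Rightarrow> nat) list"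
where
  "raise_rows l m A = concat (map (\<lambda>a. map (\<lambda>r. a(r := a r + m)) [0..<l]) A)"

lemma pdiff_det_sum:
  assumes "0 < m"
  shows "pdiff m (det_sum l c A) = det_sum l c (raise_rows l m A)"
proof -
  have "((\<lambda>z. det_sum l c A (t(m := z))) has_field_derivative
      det_sum l c (raise_rows l m A) (t(m := z))) (at z)"
    for t z
  proof (induction A)
    case (Cons a A)
    have shift: "(\<lambda>r. c r - int (a r))(r := c r - int (a r) - int m)
        = (\<lambda>r'. c r' - int ((a(r := a r + m)) r'))"
      for r by auto
    have "det_sum l c (raise_rows l m (a # A)) t'
        = (\<Sum>r<l. shifted_det l ((\<lambda>r. c r - int (a r))(r := c r - int (a r) - int m)) t')
          + det_sum l c (raise_rows l m A) t'" for t'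
      by (simp add: det_sum_def raise_rows_def shift interv_sum_list_conv_sum_set_nat atLeast0LessThan)
    then show ?case
      using Cons by (auto simp: det_sum_def intro!: DERIV_add has_field_derivative_shifted_det assms
          simp del: fun_upd_apply)
  qed (simp add: det_sum_def raise_rows_def)
  then show ?thesis
    unfolding pdiff_def by (intro ext DERIV_imp_deriv) (metis fun_upd_triv)
qed

lemma sum_raise_rows:
  assumes "\<forall>b\<in>set A. sum b {..<l} = w" and "a \<in> set (raise_rows l m A)"
  shows "sum a {..<l} = w + m"
proof -
  obtain b r where b: "b \<in> set A" and r: "r < l" and a: "a = b(r := b r + m)"
    using assms(2) by (auto simp: raise_rows_def)
  have "sum a {..<l} = sum b {..<l} + m"
    using r by (simp add: a sum.If_cases Int_absorb1 Diff_eq[symmetric] sum.remove)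
  with assms(1) b show ?thesis by simp
qed

lemma funpow_pdiff_det_sum:
  assumes "0 < m" and "\<forall>a\<in>set A. sum a {..<l} = w"
  shows "\<exists>B. (pdiff m ^^ e) (det_sum l c A) = det_sum l c B
             \<and> (\<forall>b\<in>set B. sum b {..<l} = w + e * m)"
proof (induction e)
  case (Suc e)
  then obtain B where "(pdiff m ^^ e) (det_sum l c A) = det_sum l c B"
    and "\<forall>b\<in>set B. sum b {..<l} = w + e * m"
    by blast
  then show ?case
    using assms(1) sum_raise_rows[of B l "w + e * m" _ m]
    by (intro exI[of _ "raise_rows l m B"]) (auto simp: pdiff_det_sum)
qed (use assms in auto)

lemma multi_pdiff_det_sum:
  assumes "\<forall>a\<in>set A. sum a {..<l} = w"
  shows "\<exists>B. multi_pdiff \<alpha> n (det_sum l c A) = det_sum l c B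
             \<and> (\<forall>b\<in>set B. sum b {..<l} = w + wt \<alpha> n)"
  using assms
proof (induction n arbitrary: w A)
  case (Suc n)
  obtain B where "(pdiff (Suc n) ^^ \<alpha> (Suc n)) (det_sum l c A) = det_sum l c B"
    and "\<forall>b\<in>set B. sum b {..<l} = w + \<alpha> (Suc n) * Suc n"
    using funpow_pdiff_det_sum[OF _ Suc.prems] by blast
  with Suc.IH show ?case by (fastforce simp: wt_def algebra_simps)
qed (auto simp: wt_def)

section \<open>Schur functions at \<open>[x\<^sub>1] + \<dots> + [x\<^sub>k]\<close>\<close>

definition geom_fps :: "complex \<Rightarrow> complex fps" where
  "geom_fps y = Abs_fps (\<lambda>n. y ^ Suc n)"

lemma geom_fps_mult: "geom_fps y * (1 - fps_const y * fps_X) = fps_const y"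
proof -
  have "geom_fps y * (1 - fps_const y * fps_X) = geom_fps y - fps_const y * (fps_X * geom_fps y)"
    by (simp add: algebra_simps)
  also have "\<dots> = fps_const y"
  proof (rule fps_ext)
    fix n
    show "fps_nth (geom_fps y - fps_const y * (fps_X * geom_fps y)) n = fps_nth (fps_const y) n"
      by (cases n) (simp_all add: geom_fps_def)
  qed
  finally show ?thesis .
qed

definition bracket_denom :: "nat \<Rightarrow> (nat \<Rightarrow> complex) \<Rightarrow> complex fps" where
  "bracket_denom k x = (\<Prod>i=1..k. 1 - fps_const (x i) * fps_X)"

lemma bracket_denom_Suc:
  "bracket_denom (Suc k) x = bracket_denom k x * (1 - fps_const (x (Suc k)) * fps_X)"
  by (simp add: bracket_denom_def prod.cl_ivl_Suc)

lemma bracket_denom_nth_0 [simp]: "fps_nth (bracket_denom k x) 0 = 1"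
  by (induction k) (auto simp: bracket_denom_Suc, simp add: bracket_denom_def)

lemma bracket_denom_nth_eq_0: "k < r \<Longrightarrow> fps_nth (bracket_denom k x) r = 0"
proof (induction k arbitrary: r)
  case (Suc k)
  then show ?case by (auto simp: bracket_denom_Suc algebra_simps)
qed (simp add: bracket_denom_def)

lemma fps_deriv_time_fps_bracket_sum:
  "fps_deriv (time_fps (bracket_sum k x)) = (\<Sum>i=1..k. geom_fps (x i))"
  by (rule fps_ext) (simp add: time_fps_def bracket_sum_def geom_fps_def fps_sum_nth sum_distrib_left
      del: of_nat_Suc)

lemma fps_deriv_bracket_denom:
  "fps_deriv (bracket_denom k x) = - bracket_denom k x * fps_deriv (time_fps (bracket_sum k x))"
proof (induction k)
  case (Suc k)
  let ?Q = "bracket_denom k x" and ?f = "1 - fps_const (x (Suc k)) * fps_X"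
  let ?T = "fps_deriv (time_fps (bracket_sum k x))" and ?G = "geom_fps (x (Suc k))"
  have "fps_deriv (?Q * ?f) = - ?Q * ?T * ?f - ?Q * fps_const (x (Suc k))"
    by (simp add: Suc algebra_simps)
  also have "\<dots> = - ?Q * ?T * ?f - ?Q * (?G * ?f)"
    by (simp only: geom_fps_mult)
  also have "\<dots> = - (?Q * ?f) * (?T + ?G)"
    by (simp add: algebra_simps)
  finally show ?case
    by (simp add: bracket_denom_Suc fps_deriv_time_fps_bracket_sum)
qed (simp add: bracket_denom_def fps_deriv_time_fps_bracket_sum)

lemma schur_gen_bracket_sum_mult: "schur_gen (bracket_sum k x) * bracket_denom k x = 1"
proof -
  let ?E = "schur_gen (bracket_sum k x)"
  have "fps_deriv (?E * bracket_denom k x) = 0"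
    by (simp add: fps_deriv_schur_gen fps_deriv_bracket_denom algebra_simps)
  then have "?E * bracket_denom k x = fps_const (fps_nth (?E * bracket_denom k x) 0)"
    by (simp only: fps_deriv_eq_0_iff)
  then show ?thesis by simp
qed

lemma schur_p_bracket_sum_rec:
  assumes "0 < n"
  shows "schur_p n (bracket_sum k x)
    = - (\<Sum>r=1..k. fps_nth (bracket_denom k x) r * schur_p (n - int r) (bracket_sum k x))"
proof -
  define m where "m = nat n"
  let ?g = "\<lambda>r. fps_nth (bracket_denom k x) r * schur_p (n - int r) (bracket_sum k x)"
  have "0 = fps_nth (bracket_denom k x * schur_gen (bracket_sum k x)) m"
    using assms schur_gen_bracket_sum_mult[of k x] by (simp add: m_def mult.commute)
  also have "\<dots> = (\<Sum>r=0..m. ?g r)"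
    unfolding fps_mult_nth using assms
    by (intro sum.cong refl) (simp add: m_def schur_p_eq_schur_gen nat_diff_distrib')
  also have "\<dots> = (\<Sum>r=0..m+k. ?g r)"
    using assms by (intro sum.mono_neutral_left) (auto simp: m_def schur_p_eq_schur_gen)
  also have "\<dots> = (\<Sum>r=0..k. ?g r)"
    by (intro sum.mono_neutral_right) (auto simp: bracket_denom_nth_eq_0)
  also have "\<dots> = schur_p n (bracket_sum k x) + (\<Sum>r=1..k. ?g r)"
    by (simp add: sum.atLeast_Suc_atMost)
  finally show ?thesis by (simp add: eq_neg_iff_add_eq_0)
qed

lemma sum_list_drop: "sum_list (drop k xs) = (\<Sum>i=k..<length xs. xs ! i)"
proof (cases "k \<le> length xs")
  case True
  then show ?thesis
    using sum.shift_bounds_nat_ivl[of "(!) xs" 0 k "length xs - k"]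
    by (simp add: sum_list_sum_nth add.commute)
qed simp

theorem proposition2p3:
  fixes lam :: "nat list" and k n :: nat and alpha :: "nat \<Rightarrow> nat" and x :: "nat \<Rightarrow> complex"
  assumes "is_partition lam"
    and "k < length lam"
    and "\<forall>i > n. alpha i = 0"
    and "wt alpha n < N_lk lam k"
  shows "multi_pdiff alpha n (schur_s lam) (bracket_sum k x) = 0"
proof -
  define l where "l = length lam"
  define f where "f i = int (lam ! i) - int i" for i
  have antitone: "f j \<le> f i" if "i \<le> j" "j < l" for i j
    using assms(1) that sorted_wrt_nth_less[of "(\<ge>)" lam i j]
    by (cases "i = j") (auto simp: is_partition_def l_def f_def)
  have "schur_s lam = det_sum l f [\<lambda>_. 0]"
    by (simp add: fun_eq_iff schur_s_def det_sum_def shifted_det_def f_def l_def)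
  then obtain B where B: "multi_pdiff alpha n (schur_s lam) = det_sum l f B"
    and weight: "\<forall>b\<in>set B. sum b {..<l} = wt alpha n"
    using multi_pdiff_det_sum[of "[\<lambda>_. 0]" l 0 alpha n f] by auto
  have "int (N_lk lam k) = (\<Sum>i=k..<l. f i + int i)"
    by (simp add: N_lk_def sum_list_drop f_def l_def)
  then have "shifted_det l (\<lambda>r. f r - int (b r)) (bracket_sum k x) = 0" if "b \<in> set B" for b
    unfolding shifted_det_def
    using assms(4) weight that
    by (intro det_linear_recurrence_eq_0[OF _ schur_p_bracket_sum_rec antitone])
      (auto simp: schur_p_eq_schur_gen simp flip: of_nat_sum)
  then show ?thesis
    by (simp add: B det_sum_def sum_list_sum_nth)
qed

end
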